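(* For any well-typed CC expression $\Gamma\vdash M:A$, $[\![A]\!]_d\subseteq[\![M]\!]_d$.
   Context: CC: expressions $x\mid U_i\mid\Pi x{:}A.B\mid L\,M\mid\lambda x{:}A.M$ with the standard typing rules (variable, $U_i:U_{i+1}$, $\Pi x{:}A.B:U_{\max(i,j)}$, application $M\,N:B[N/x]$ for $M:\Pi x{:}A.B$, $N:A$, abstraction $\lambda x{:}A.M:\Pi x{:}A.B$ for $M:B$ under $x{:}A$, conversion along $\beta\eta$-equivalence to a type in some universe). Each $\lambda$ is tagged with a distinct $i$ ($\lambda^i$), corresponding to label $\ell_i$. Target DCC: expressions $x\mid U_i\mid\Pi x{:}A.B\mid L@M\mid\ell_i\{\overline M\}$ and label contexts $\Delta::=\cdot\mid\Delta,\ell_i(\{\overline x{:}\overline A\},x{:}A\mapsto M:B)$. Defined by induction on the (implicit) typing derivation: for $\Gamma\vdash M:A$, $\mathrm{FV}(M)=\mathrm{FV}(A_1)\cup\dots\cup\mathrm{FV}(A_n)\cup(x_1{:}A_1,\dots,x_n{:}A_n)$ where $x_1,\dots,x_n$ are the unbound variables of $M$ and $A$ and $\Gamma\vdash x_k:A_k$ ($\cup$ appends the right operand's new entries in order; same for label contexts). $[\![-]\!]$: $x\mapsto x$, $U_i\mapsto U_i$, $\Pi x{:}A.B\mapsto\Pi x{:}[\![A]\!].[\![B]\!]$, $M\,N\mapsto[\![M]\!]@[\![N]\!]$, $\lambda^ix{:}A.M\mapsto\ell_i\{\overline x\}$, $\overline x{:}\overline A=\mathrm{FV}(\lambda^ix{:}A.M)$.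 $[\![-]\!]_d$: universe $\mapsto\cdot$; variable of type $A\mapsto[\![A]\!]_d$; $\Pi x{:}A.B\mapsto[\![A]\!]_d\cup[\![B]\!]_d$; $M\,N:B[N/x]$ (with $M:\Pi x{:}A.B$) $\mapsto[\![M]\!]_d\cup[\![N]\!]_d\cup[\![B[N/x]]\!]_d$; $\lambda^ix{:}A.M:\Pi x{:}A.B\mapsto([\![A]\!]_d\cup[\![M]\!]_d),\ell_i(\{\overline x{:}[\![\overline A]\!]\},x{:}[\![A]\!]\mapsto[\![M]\!]:[\![B]\!])$; a conversion from $M:A$ to $M:B\mapsto[\![M]\!]_d\cup[\![B]\!]_d$. $\Delta_1\subseteq\Delta_2$ means every entry of $\Delta_1$ is an entry of $\Delta_2$. *)

theory Defs
  imports Main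
begin

section \<open>Source language CC (de Bruijn indices; index 0 = most recently bound variable)\<close>

text \<open>Lam l A M is the abstraction lambda^l x:A. M, tagged with l (label ell_l).
  Pi A B is Pi x:A. B, where the bound variable is index 0 in B.\<close>

datatype tm = Var nat | U nat | Pi tm tm | App tm tm | Lam nat tm tm

fun lift :: "nat \<Rightarrow> tm \<Rightarrow> tm" where
  "lift k (Var i) = (if i < k then Var i else Var (Suc i))"
| "lift k (U i) = U i"
| "lift k (Pi A B) = Pi (lift k A) (lift (Suc k) B)"
| "lift k (App M N) = App (lift k M) (lift k N)"
| "lift k (Lam l A M) = Lam l (lift k A) (lift (Suc k) M)"

text \<open>subst M k N = M[N/k] (capture-avoiding substitution, removing index k)\<close>
fun subst :: "tm \<Rightarrow> nat \<Rightarrow> tm \<Rightarrow> tm" where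
  "subst (Var i) k N = (if i < k then Var i else if i = k then N else Var (i - 1))"
| "subst (U i) k N = U i"
| "subst (Pi A B) k N = Pi (subst A k N) (subst B (Suc k) (lift 0 N))"
| "subst (App L M) k N = App (subst L k N) (subst M k N)"
| "subst (Lam l A M) k N = Lam l (subst A k N) (subst M (Suc k) (lift 0 N))"

fun fv :: "tm \<Rightarrow> nat set" where
  "fv (Var i) = {i}"
| "fv (U i) = {}"
| "fv (Pi A B) = fv A \<union> {i. Suc i \<in> fv B}"
| "fv (App M N) = fv M \<union> fv N"
| "fv (Lam l A M) = fv A \<union> {i. Suc i \<in> fv M}"

inductive red :: "tm \<Rightarrow> tm \<Rightarrow> bool" where
  beta: "red (App (Lam l A M) N) (subst M 0 N)"
| eta: "red (Lam l A (App (lift 0 M) (Var 0))) M"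
| pi1: "red A A' \<Longrightarrow> red (Pi A B) (Pi A' B)"
| pi2: "red B B' \<Longrightarrow> red (Pi A B) (Pi A B')"
| app1: "red M M' \<Longrightarrow> red (App M N) (App M' N)"
| app2: "red N N' \<Longrightarrow> red (App M N) (App M N')"
| lam1: "red A A' \<Longrightarrow> red (Lam l A M) (Lam l A' M)"
| lam2: "red M M' \<Longrightarrow> red (Lam l A M) (Lam l A M')"

definition conv :: "tm \<Rightarrow> tm \<Rightarrow> bool" where
  "conv = equivclp red"

type_synonym ctx = "tm list"   \<comment> \<open>head = type of index 0\<close>

text \<open>type of variable k in context \<Gamma>, weakened to \<Gamma>\<close>
definition lookup_ty :: "ctx \<Rightarrow> nat \<Rightarrow> tm" where
  "lookup_ty \<Gamma> k = (lift 0 ^^ Suc k) (\<Gamma> ! k)"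

text \<open>DLab l Ms is ell_l{Ms}; DApp is L @ M\<close>
datatype dtm = DVar nat | DU nat | DPi dtm dtm | DApp dtm dtm | DLab nat "dtm list"

fun dlift :: "nat \<Rightarrow> dtm \<Rightarrow> dtm" where
  "dlift k (DVar i) = (if i < k then DVar i else DVar (Suc i))"
| "dlift k (DU i) = DU i"
| "dlift k (DPi A B) = DPi (dlift k A) (dlift (Suc k) B)"
| "dlift k (DApp M N) = DApp (dlift k M) (dlift k N)"
| "dlift k (DLab l Ms) = DLab l (map (dlift k) Ms)"

text \<open>A label-context entry ell_l({xs : As}, x:A |-> M : B):
  LEntry l [(x1,A1),...,(xn,An)] A M B.  The environment variables are de Bruijn
  indices of the enclosing source context, M and B live in that context extended by A.\<close>
datatype lentry = LEntry nat "(nat \<times> dtm) list" dtm dtm dtm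

type_synonym lctx = "lentry list"

definition unionL :: "'a list \<Rightarrow> 'a list \<Rightarrow> 'a list" (infixl "\<union>\<^sub>L" 65) where
  "xs \<union>\<^sub>L ys = xs @ remdups (filter (\<lambda>y. y \<notin> set xs) ys)"

text \<open>fvs \<Gamma> S: the sequence FV for a set S of unbound variables (relative to \<Gamma>):
  FV(A_1) \<union> ... \<union> FV(A_n) \<union> (x_1,...,x_n), with x_1,...,x_n the elements of S listed in
  context order (outermost/oldest first), and FV(A_k) computed for the type A_k of x_k
  (A_k lives in the part of \<Gamma> preceding x_k; its indices are shifted back to \<Gamma>).\<close>
function fvs :: "ctx \<Rightarrow> nat set \<Rightarrow> nat list" where
  "fvs \<Gamma> S =
     foldl unionL [] (map (\<lambda>k. map (\<lambda>j. j + Suc k) (fvs (drop (Suc k) \<Gamma>) (fv (\<Gamma> ! k))))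
                          (rev (sorted_list_of_set {k \<in> S. k < length \<Gamma>})))
     \<union>\<^sub>L rev (sorted_list_of_set {k \<in> S. k < length \<Gamma>})"
  by pat_completeness auto
termination
  by (relation "measure (\<lambda>(\<Gamma>, S). length \<Gamma>)") auto

text \<open>
  wfc \<Gamma> \<Gamma>': \<Gamma> is a well-formed context, \<Gamma>' its translation (via chosen derivations).
  tr \<Gamma> \<Gamma>' M A M' \<Delta>: a derivation of \<Gamma> |- M : A whose translation is [[M]] = M'
  and [[M]]_d = \<Delta>.  Each rule is a CC typing rule, extended by premises providing
  derivations of those types whose translation is needed.\<close>
inductive wfc :: "ctx \<Rightarrow> dtm list \<Rightarrow> bool"
  and tr :: "ctx \<Rightarrow> dtm list \<Rightarrow> tm \<Rightarrow> tm \<Rightarrow> dtm \<Rightarrow> lctx \<Rightarrow> bool" where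
  wfc_nil: "wfc [] []"
| wfc_cons: "wfc \<Gamma> \<Gamma>' \<Longrightarrow> tr \<Gamma> \<Gamma>' A (U i) A' \<Delta> \<Longrightarrow> wfc (A # \<Gamma>) (A' # \<Gamma>')"
| tr_var: "wfc \<Gamma> \<Gamma>' \<Longrightarrow> k < length \<Gamma> \<Longrightarrow> tr \<Gamma> \<Gamma>' (lookup_ty \<Gamma> k) (U i) A' \<Delta>
     \<Longrightarrow> tr \<Gamma> \<Gamma>' (Var k) (lookup_ty \<Gamma> k) (DVar k) \<Delta>"
| tr_univ: "wfc \<Gamma> \<Gamma>' \<Longrightarrow> tr \<Gamma> \<Gamma>' (U i) (U (Suc i)) (DU i) []"
| tr_pi: "tr \<Gamma> \<Gamma>' A (U i) A' \<Delta>1 \<Longrightarrow> tr (A # \<Gamma>) (A' # \<Gamma>') B (U j) B' \<Delta>2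
     \<Longrightarrow> tr \<Gamma> \<Gamma>' (Pi A B) (U (max i j)) (DPi A' B') (\<Delta>1 \<union>\<^sub>L \<Delta>2)"
| tr_app: "tr \<Gamma> \<Gamma>' M (Pi A B) M' \<Delta>1 \<Longrightarrow> tr \<Gamma> \<Gamma>' N A N' \<Delta>2
     \<Longrightarrow> tr \<Gamma> \<Gamma>' (subst B 0 N) (U k) C' \<Delta>3
     \<Longrightarrow> tr \<Gamma> \<Gamma>' (App M N) (subst B 0 N) (DApp M' N') (\<Delta>1 \<union>\<^sub>L \<Delta>2 \<union>\<^sub>L \<Delta>3)"
| tr_lam: "tr \<Gamma> \<Gamma>' A (U i) A' \<Delta>1 \<Longrightarrow> tr (A # \<Gamma>) (A' # \<Gamma>') M B M' \<Delta>2
     \<Longrightarrow> tr (A # \<Gamma>) (A' # \<Gamma>') B (U j) B' \<Delta>3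
     \<Longrightarrow> xs = fvs \<Gamma> (fv (Lam l A M) \<union> fv (Pi A B))
     \<Longrightarrow> tr \<Gamma> \<Gamma>' (Lam l A M) (Pi A B) (DLab l (map DVar xs))
           ((\<Delta>1 \<union>\<^sub>L \<Delta>2) @ [LEntry l (map (\<lambda>k. (k, (dlift 0 ^^ Suc k) (\<Gamma>' ! k))) xs) A' M' B'])"
| tr_conv: "tr \<Gamma> \<Gamma>' M A M' \<Delta>1 \<Longrightarrow> tr \<Gamma> \<Gamma>' B (U i) B' \<Delta>2 \<Longrightarrow> conv A B
     \<Longrightarrow> tr \<Gamma> \<Gamma>' M B M' (\<Delta>1 \<union>\<^sub>L \<Delta>2)"

end

theory Submission
  imports Defs
begin

(* For variables, applications and conversions the
   rule itself carries a derivation of A whose label context is part of the conclusion's.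
   Universes and Pi-types have a universe as type, whose translation has an empty label
   context.  For an abstraction the type Pi A B is rebuilt by the Pi rule from the
   derivation of A and the derivation of B provided by the induction hypothesis. *)

declare fvs.simps [simp del] \<comment> \<open>its unguarded recursive call makes the simplifier loop\<close>

lemma set_unionL [simp]: "set (xs \<union>\<^sub>L ys) = set xs \<union> set ys"
  unfolding unionL_def by auto

lemma tr_wfc: "tr \<Gamma> \<Gamma>' M A M' \<Delta> \<Longrightarrow> wfc \<Gamma> \<Gamma>'"
  by (induction rule: wfc_tr.inducts(2)[where ?P1.0="\<lambda>_ _. True"]) simp_all

lemma tr_U_if_tr: "tr \<Gamma> \<Gamma>' M A M' \<Delta> \<Longrightarrow> tr \<Gamma> \<Gamma>' (U i) (U (Suc i)) (DU i) []"
  by (rule wfc_tr.tr_univ[OF tr_wfc])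

theorem lemma3p9:
  assumes "tr \<Gamma> \<Gamma>' M A M' \<Delta>"
  shows "\<exists>i A' \<Delta>A. tr \<Gamma> \<Gamma>' A (U i) A' \<Delta>A \<and> set \<Delta>A \<subseteq> set \<Delta>"
  using assms
proof (induction rule: wfc_tr.inducts(2)[where ?P1.0="\<lambda>_ _. True"])
  case (tr_var \<Gamma> \<Gamma>' k i A' \<Delta>)
  then show ?case by blast
next
  case (tr_univ \<Gamma> \<Gamma>' i)
  from \<open>wfc \<Gamma> \<Gamma>'\<close> have "tr \<Gamma> \<Gamma>' (U (Suc i)) (U (Suc (Suc i))) (DU (Suc i)) []"
    by (rule wfc_tr.tr_univ)
  then show ?case by fastforce
next
  case (tr_pi \<Gamma> \<Gamma>' A i A' \<Delta>1 B j B' \<Delta>2)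
  have "tr \<Gamma> \<Gamma>' (U (max i j)) (U (Suc (max i j))) (DU (max i j)) []"
    using tr_pi.hyps(1) by (rule tr_U_if_tr)
  then show ?case by fastforce
next
  case (tr_lam \<Gamma> \<Gamma>' A i A' \<Delta>1 M B M' \<Delta>2 j B' \<Delta>3 xs l)
  \<comment> \<open>The rule's own derivation of B is not usable: its label context \<Delta>3 is discarded.\<close>
  from tr_lam.IH(2) obtain i' B'' \<Delta>B
    where B: "tr (A # \<Gamma>) (A' # \<Gamma>') B (U i') B'' \<Delta>B" "set \<Delta>B \<subseteq> set \<Delta>2"
    by blast
  have "tr \<Gamma> \<Gamma>' (Pi A B) (U (max i i')) (DPi A' B'') (\<Delta>1 \<union>\<^sub>L \<Delta>B)"
    using tr_lam.hyps(1) B(1) by (rule wfc_tr.tr_pi)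
  with B(2) show ?case by fastforce
next
  case (tr_app \<Gamma> \<Gamma>' M A B M' \<Delta>1 N N' \<Delta>2 k C' \<Delta>3)
  have "set \<Delta>3 \<subseteq> set (\<Delta>1 \<union>\<^sub>L \<Delta>2 \<union>\<^sub>L \<Delta>3)" by simp
  then show ?case using tr_app.hyps(3) by blast
next
  case (tr_conv \<Gamma> \<Gamma>' M A M' \<Delta>1 B i B' \<Delta>2)
  have "set \<Delta>2 \<subseteq> set (\<Delta>1 \<union>\<^sub>L \<Delta>2)" by simp
  then show ?case using tr_conv.hyps(2) by blast
qed (rule TrueI)+

end
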